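(* Let $H=(T_1,\dots,T_n,p_1,\dots,p_n)$ be a strategic game. (i) If $\mathbf D(\beta)$ holds for all $\beta<\alpha$, then $\overline{GS}^{\alpha}=\overline{LS}^{\alpha}$. In particular, if $\mathbf D(\alpha)$ holds for all ordinals $\alpha$, then the outcomes of $\overline{GS}$ and $\overline{LS}$ coincide. (ii) If $\mathbf D(\alpha)$ holds for all ordinals $\alpha$, then $\overline{LS}$ is order independent. (iii) If $\mathbf D(\beta)$ holds for all $\beta<\alpha+1$, then $LS^{\alpha}=\overline{LS}^{\alpha}$. In particular, if $\mathbf D(\alpha)$ holds for all ordinals $\alpha$, then the outcome of $LS$ exists and equals the outcome of $\overline{LS}$.
   Context: A strategic game has nonempty strategy sets $T_i$ and real payoffs $p_i$. A restriction of $H$ is $G=(S_1,\dots,S_n)$ with $S_i\subseteq T_i$ (possibly empty), ordered componentwise (complete lattice with top $H$). For $s_i,s_i'\in T_i$, $s_i'\succ_G s_i$ means $p_i(s_i',s_{-i})>p_i(s_i,s_{-i})$ for all $s_{-i}\in\prod_{j\ne i}S_j$ (vacuous if empty). $GS(G):=(S_1',\dots,S_n')$ with $S_i':=\{s_i\in T_i\mid\neg\exists s_i'\in T_i:\ s_i'\succ_G s_i\}$; $LS(G):=(S_1',\dots,S_n')$ with $S_i':=\{s_i\in T_i\mid\neg\exists s_i'\in S_i:\ s_i'\succ_G s_i\}$; $\overline{T}(G):=T(G)\cap G$. Iterations: $T^0:=H$, $T^{\alpha+1}:=T(T^\alpha)$, $T^\beta:=\bigcap_{\alpha<\beta}T^\alpha$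 for limit $\beta$; outcome $T^{\alpha_T}$, $\alpha_T$ the least $\alpha$ with $T^{\alpha+1}=T^\alpha$. $R$ is a relaxation of $T$ if for all ordinals $\alpha$: (1) $T(R^\alpha)\subseteq R(R^\alpha)$; (2) if $T(R^\alpha)\subseteq R^\alpha$ then $R(R^\alpha)\subseteq R^\alpha$; (3) if $R(R^\alpha)=R^\alpha$ then $T(R^\alpha)=R^\alpha$. $T$ is order independent if the set of outcomes of relaxations of $T$ has at most one element. Property $\mathbf D(\alpha)$: for every relaxation $R$ of $\overline{LS}$, writing $R^\alpha=(S_1,\dots,S_n)$, every $i$ and every $s_i\in T_i$: if some $s_i'\in T_i$ has $s_i'\succ_{R^\alpha}s_i$, then some $s_i^*\in S_i$ has $s_i^*\succ_{R^\alpha}s_i$. *)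

theory Defs
  imports Complex_Main
begin

text \<open>
Strategic game: players form a finite (nonempty) type 'p, all strategies live in a
common type 'a, player i's strategy set is T i, and payoff p i takes a full strategy
profile 'p => 'a. A restriction is any G :: 'p => 'a set with G <= T (pointwise);
the componentwise order is the library order on functions, intersection is inf.
Ordinals are represented by the elements of a type 'o of class wellorder.
\<close>

type_synonym ('p, 'a) restr = "'p \<Rightarrow> 'a set"
type_synonym ('p, 'a) oper = "('p, 'a) restr \<Rightarrow> ('p, 'a) restr"

definition sdom :: "('p \<Rightarrow> ('p \<Rightarrow> 'a) \<Rightarrow> real) \<Rightarrow> ('p, 'a) restr \<Rightarrow> 'p \<Rightarrow> 'a \<Rightarrow> 'a \<Rightarrow> bool" where
  "sdom p G i s' s \<longleftrightarrow>
     (\<forall>t :: 'p \<Rightarrow> 'a. (\<forall>j. j \<noteq> i \<longrightarrow> t j \<in> G j) \<longrightarrow> p i (t(i := s')) > p i (t(i := s)))"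

definition GS :: "('p, 'a) restr \<Rightarrow> ('p \<Rightarrow> ('p \<Rightarrow> 'a) \<Rightarrow> real) \<Rightarrow> ('p, 'a) oper" where
  "GS T p G = (\<lambda>i. {s \<in> T i. \<not> (\<exists>s' \<in> T i. sdom p G i s' s)})"

definition LS :: "('p, 'a) restr \<Rightarrow> ('p \<Rightarrow> ('p \<Rightarrow> 'a) \<Rightarrow> real) \<Rightarrow> ('p, 'a) oper" where
  "LS T p G = (\<lambda>i. {s \<in> T i. \<not> (\<exists>s' \<in> G i. sdom p G i s' s)})"

definition bar :: "('p, 'a) oper \<Rightarrow> ('p, 'a) oper" where
  "bar F G = inf (F G) G"

text \<open>Transfinite iteration along the well-order 'o, starting at H:
  least element |-> H; successor of g |-> F (iterate g); limit |-> intersection of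
  all earlier stages.\<close>
definition is_pred :: "'o::wellorder \<Rightarrow> 'o \<Rightarrow> bool" where
  "is_pred g a \<longleftrightarrow> g < a \<and> (\<forall>d. g < d \<longrightarrow> a \<le> d)"

definition iter_step :: "('p, 'a) restr \<Rightarrow> ('p, 'a) oper \<Rightarrow> ('o::wellorder \<Rightarrow> ('p, 'a) restr) \<Rightarrow> 'o \<Rightarrow> ('p, 'a) restr" where
  "iter_step H F rec a =
     (if \<forall>b. \<not> b < a then H
      else if \<exists>g. is_pred g a then F (rec (THE g. is_pred g a))
      else (INF b \<in> {b. b < a}. rec b))"

definition iter :: "('p, 'a) restr \<Rightarrow> ('p, 'a) oper \<Rightarrow> 'o::wellorder \<Rightarrow> ('p, 'a) restr" where
  "iter H F = wfrec {(x, y). x < y} (iter_step H F)"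

definition stab :: "('p, 'a) restr \<Rightarrow> ('p, 'a) oper \<Rightarrow> 'o::wellorder \<Rightarrow> bool" where
  "stab H F a \<longleftrightarrow> F (iter H F a) = iter H F a"

definition has_outcome :: "('p, 'a) restr \<Rightarrow> ('p, 'a) oper \<Rightarrow> 'o::wellorder itself \<Rightarrow> bool" where
  "has_outcome H F _ \<longleftrightarrow> (\<exists>a::'o. stab H F a)"

definition outcome :: "('p, 'a) restr \<Rightarrow> ('p, 'a) oper \<Rightarrow> 'o::wellorder itself \<Rightarrow> ('p, 'a) restr" where
  "outcome H F _ = iter H F (LEAST a::'o. stab H F a)"

definition relaxation :: "('p, 'a) restr \<Rightarrow> ('p, 'a) oper \<Rightarrow> ('p, 'a) oper \<Rightarrow> 'o::wellorder itself \<Rightarrow> bool" where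
  "relaxation H Top R _ \<longleftrightarrow>
     (\<forall>G. G \<le> H \<longrightarrow> R G \<le> H) \<and>
     (\<forall>a::'o. let G = iter H R a in
        Top G \<le> R G \<and> (Top G \<le> G \<longrightarrow> R G \<le> G) \<and> (R G = G \<longrightarrow> Top G = G))"

definition order_independent :: "('p, 'a) restr \<Rightarrow> ('p, 'a) oper \<Rightarrow> 'o::wellorder itself \<Rightarrow> bool" where
  "order_independent H Top w \<longleftrightarrow>
     (\<forall>R1 R2. relaxation H Top R1 w \<and> has_outcome H R1 w \<and>
              relaxation H Top R2 w \<and> has_outcome H R2 w \<longrightarrow>
              outcome H R1 w = outcome H R2 w)"

definition propD :: "('p, 'a) restr \<Rightarrow> ('p \<Rightarrow> ('p \<Rightarrow> 'a) \<Rightarrow> real) \<Rightarrow> 'o::wellorder \<Rightarrow> bool" where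
  "propD T p a \<longleftrightarrow>
     (\<forall>R. relaxation T (bar (LS T p)) R TYPE('o) \<longrightarrow>
        (let G = iter T R a in
          \<forall>i s. s \<in> T i \<longrightarrow> (\<exists>s' \<in> T i. sdom p G i s' s) \<longrightarrow> (\<exists>s' \<in> G i. sdom p G i s' s)))"

text \<open>'o has enough ordinals: strictly larger cardinality than the set of restrictions.\<close>
definition large_ord :: "'o::wellorder itself \<Rightarrow> ('p, 'a) restr itself \<Rightarrow> bool" where
  "large_ord _ _ \<longleftrightarrow> \<not> (\<exists>f :: 'o \<Rightarrow> ('p, 'a) restr. inj f)"

lemma iter_unfold:
  "iter H F a = iter_step H F (\<lambda>b. if b < a then iter H F b else undefined) a"
  unfolding iter_def
  by (subst wfrec) (auto simp: wf wf_def cut_def intro: less_induct)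

end

theory Submission
  imports Defs
begin

text \<open>
Property D says that along every relaxation of LS-bar, local elimination (dominators from
the current restriction) removes exactly what global elimination removes: LS = GS on every
stage. Hence the GS-bar and LS-bar iterations agree stage by stage. Since GS is monotone,
its bar-iterates are closed under GS, so on them LS = GS already lies inside the current
restriction and the bar in LS-bar is superfluous. For order independence, the outcome of a
relaxation is a post-fixed point of GS, and by monotonicity of GS such a point stays below
every stage of every other relaxation. Outcomes exist because bar-iterations decrease
strictly until they stabilise, while the ordinals are too many to inject into restrictions.
\<close>

lemma is_pred_unique: "is_pred g a \<Longrightarrow> is_pred g' a \<Longrightarrow> g = g'"
  unfolding is_pred_def by (metis leD linorder_neqE)

lemma is_pred_less: "is_pred g a \<Longrightarrow> g < a"
  by (simp add: is_pred_def)

lemma is_pred_greatest: "is_pred g a \<Longrightarrow> b < a \<Longrightarrow> b \<le> g"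
  unfolding is_pred_def by (meson leD le_less_linear)

lemma is_pred_Least_greater:
  "b < (a::'o::wellorder) \<Longrightarrow> is_pred b (LEAST d. b < d) \<and> (LEAST d. b < d) \<le> a"
  unfolding is_pred_def by (metis LeastI Least_le)

lemma pred_limit_induct [case_names zero succ limit]:
  assumes "\<And>a. (\<forall>b. \<not> b < a) \<Longrightarrow> Q a"
    and "\<And>g a. is_pred g a \<Longrightarrow> (\<And>b. b < a \<Longrightarrow> Q b) \<Longrightarrow> Q a"
    and "\<And>a b. b < a \<Longrightarrow> \<not> (\<exists>g. is_pred g a) \<Longrightarrow> (\<And>b. b < a \<Longrightarrow> Q b) \<Longrightarrow> Q a"
  shows "Q (a::'o::wellorder)"
  by (induction a rule: less_induct) (metis assms)

lemma iter_zero: "(\<forall>b. \<not> b < a) \<Longrightarrow> iter H F (a::'o::wellorder) = H"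
  by (subst iter_unfold) (simp add: iter_step_def)

lemma iter_succ: "is_pred g a \<Longrightarrow> iter H F (a::'o::wellorder) = F (iter H F g)"
proof -
  assume g: "is_pred g a"
  then have "(THE g. is_pred g a) = g" using is_pred_unique by blast
  with g show ?thesis
    by (subst iter_unfold) (simp add: iter_step_def is_pred_less, metis is_pred_less)
qed

lemma iter_limit:
  "b < a \<Longrightarrow> \<not> (\<exists>g. is_pred g a) \<Longrightarrow> iter H F (a::'o::wellorder) = (INF b\<in>{b. b < a}. iter H F b)"
  by (subst iter_unfold) (auto simp: iter_step_def)

lemma iter_le:
  assumes "\<forall>G. G \<le> H \<longrightarrow> F G \<le> H"
  shows "iter H F (a::'o::wellorder) \<le> H"
proof (induction a rule: pred_limit_induct)
  case (zero a)
  then show ?case by (simp add: iter_zero)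
next
  case (succ g a)
  then show ?case using assms by (simp add: iter_succ is_pred_less)
next
  case (limit a b)
  then show ?case by (subst iter_limit[OF limit(1,2)]) (rule INF_lower2[of b]; simp)
qed

lemma iter_antitone:
  assumes decreasing: "\<forall>a. F (iter H F (a::'o::wellorder)) \<le> iter H F a"
  shows "b \<le> a \<Longrightarrow> iter H F (a::'o) \<le> iter H F b"
proof (induction a rule: pred_limit_induct)
  case (zero a)
  then show ?case by (metis order.order_iff_strict order_refl)
next
  case (succ g a)
  show ?case
  proof (cases "b = a")
    case False
    with succ have "iter H F g \<le> iter H F b"
      by (simp add: is_pred_greatest is_pred_less)
    then show ?thesis using decreasing iter_succ[OF succ(1)] by (metis order_trans)
  qed simp
next
  case (limit a c)
  show ?case
  proof (cases "b = a")
    case False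
    with limit show ?thesis by (subst iter_limit[OF limit(1,2)]) (rule INF_lower; simp)
  qed simp
qed

lemma iter_strict_antitone:
  assumes decreasing: "\<forall>a. F (iter H F (a::'o::wellorder)) \<le> iter H F a"
    and unstable: "\<not> (\<exists>a::'o. stab H F a)"
    and "b < a"
  shows "iter H F (a::'o) < iter H F b"
proof -
  define s where "s = (LEAST d. b < d)"
  have s: "is_pred b s" "s \<le> a"
    using is_pred_Least_greater[OF \<open>b < a\<close>] by (simp_all add: s_def)
  have "iter H F a \<le> iter H F s" by (rule iter_antitone[OF decreasing s(2)])
  also have "iter H F s = F (iter H F b)" by (rule iter_succ[OF s(1)])
  also have "\<dots> < iter H F b"
    using decreasing unstable unfolding stab_def by (metis order_less_le)
  finally show ?thesis .
qed

lemma has_outcome_if_decreasing: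
  fixes F :: "('p, 'a) oper"
  assumes decreasing: "\<forall>a. F (iter H F (a::'o::wellorder)) \<le> iter H F a"
    and large: "large_ord TYPE('o) TYPE(('p, 'a) restr)"
  shows "has_outcome H F TYPE('o)"
  unfolding has_outcome_def
proof (rule ccontr)
  assume "\<not> (\<exists>a::'o. stab H F a)"
  then have "inj (iter H F :: 'o \<Rightarrow> ('p, 'a) restr)"
    by (intro injI) (metis iter_strict_antitone[OF decreasing] less_irrefl linorder_neqE)
  then show False using large unfolding large_ord_def by blast
qed

lemma bar_le: "bar F G \<le> G"
  unfolding bar_def by simp

lemma has_outcome_bar:
  fixes H :: "('p, 'a) restr"
  shows "large_ord TYPE('o::wellorder) TYPE(('p, 'a) restr) \<Longrightarrow> has_outcome H (bar F) TYPE('o)"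
  by (rule has_outcome_if_decreasing) (simp_all add: bar_le)

lemma iter_eq_if_agree_below:
  assumes "\<forall>b<a. F (iter H G b) = G (iter H G b)"
  shows "iter H F (a::'o::wellorder) = iter H G a"
proof -
  have "(\<forall>b<a. F (iter H G b) = G (iter H G b)) \<longrightarrow> iter H F a = iter H G a"
  proof (induction a rule: pred_limit_induct)
    case (zero a)
    then show ?case by (simp add: iter_zero)
  next
    case (succ g a)
    then show ?case by (auto simp: iter_succ is_pred_less)
  next
    case (limit a b)
    then show ?case by (auto simp: iter_limit intro: INF_cong)
  qed
  with assms show ?thesis by blast
qed

lemma outcome_eq_if_agree:
  assumes agree: "\<forall>a::'o::wellorder. F (iter H G a) = G (iter H G a)"
  shows "has_outcome H F TYPE('o) = has_outcome H G TYPE('o)"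
    and "outcome H F TYPE('o) = outcome H G TYPE('o)"
proof -
  have iter_eq: "iter H F = (iter H G :: 'o \<Rightarrow> _)"
    using iter_eq_if_agree_below agree by blast
  have "stab H F = (stab H G :: 'o \<Rightarrow> bool)"
    using agree unfolding stab_def iter_eq by simp
  then show "has_outcome H F TYPE('o) = has_outcome H G TYPE('o)"
    and "outcome H F TYPE('o) = outcome H G TYPE('o)"
    unfolding has_outcome_def outcome_def iter_eq by simp_all
qed

lemma relaxation_bar_self: "relaxation H (bar F) (bar F) w"
  unfolding relaxation_def Let_def using bar_le by (metis order_refl order_trans)

lemma iter_relaxation_le: "relaxation H Top R w \<Longrightarrow> iter H R (a::'o::wellorder) \<le> H"
  unfolding relaxation_def by (intro iter_le) blast

lemma iter_bar_prefixed:
  assumes "mono F" and "F H \<le> H"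
  shows "F (iter H (bar F) (a::'o::wellorder)) \<le> iter H (bar F) a"
proof (induction a rule: pred_limit_induct)
  case (zero a)
  then show ?case by (simp add: iter_zero assms(2))
next
  case (succ g a)
  let ?G = "iter H (bar F) g"
  have "F (iter H (bar F) a) \<le> F ?G"
    by (rule monoD[OF \<open>mono F\<close>]) (simp add: iter_succ[OF succ(1)] bar_le)
  moreover have "F ?G \<le> ?G" by (rule succ(2)[OF is_pred_less[OF succ(1)]])
  ultimately have "F (iter H (bar F) a) \<le> bar F ?G"
    unfolding bar_def by (meson le_inf_iff order_trans)
  then show ?case by (simp only: iter_succ[OF succ(1)])
next
  case (limit a b)
  show ?case unfolding iter_limit[OF limit(1,2)]
  proof (rule INF_greatest)
    fix c assume "c \<in> {b. b < a}"
    then have "c < a" by simp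
    have "F (INF b\<in>{b. b < a}. iter H (bar F) b) \<le> F (iter H (bar F) c)"
      by (rule monoD[OF \<open>mono F\<close>]) (rule INF_lower; simp add: \<open>c < a\<close>)
    also have "\<dots> \<le> iter H (bar F) c" by (rule limit(3)[OF \<open>c < a\<close>])
    finally show "F (INF b\<in>{b. b < a}. iter H (bar F) b) \<le> iter H (bar F) c" .
  qed
qed

lemma mono_GS: "mono (GS T p)"
  unfolding mono_def GS_def sdom_def le_fun_def by (auto; blast)

lemma GS_le: "GS T p G \<le> T"
  unfolding GS_def le_fun_def by auto

lemma GS_le_LS: "G \<le> T \<Longrightarrow> GS T p G \<le> LS T p G"
  unfolding GS_def LS_def le_fun_def by auto

lemma LS_le_GS_if_propD:
  assumes "propD T p (a::'o::wellorder)" and "relaxation T (bar (LS T p)) R TYPE('o)"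
  shows "LS T p (iter T R a) \<le> GS T p (iter T R a)"
  using assms unfolding propD_def Let_def LS_def GS_def le_fun_def by blast

lemma LS_eq_GS_if_propD:
  assumes "propD T p (a::'o::wellorder)" and "relaxation T (bar (LS T p)) R TYPE('o)"
  shows "LS T p (iter T R a) = GS T p (iter T R a)"
  using LS_le_GS_if_propD[OF assms] GS_le_LS[OF iter_relaxation_le[OF assms(2)]]
  by (rule order.antisym)

lemma GS_postfixed_le_iter_relaxation:
  assumes R: "relaxation T (bar (LS T p)) R TYPE('o::wellorder)"
    and "X \<le> T" and "X \<le> GS T p X"
  shows "X \<le> iter T R (a::'o)"
proof (induction a rule: pred_limit_induct)
  case (zero a)
  then show ?case by (simp add: iter_zero \<open>X \<le> T\<close>)
next
  case (succ g a)
  let ?G = "iter T R g"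
  have "X \<le> ?G" using succ by (simp add: is_pred_less)
  have "X \<le> GS T p ?G" using \<open>X \<le> GS T p X\<close> monoD[OF mono_GS \<open>X \<le> ?G\<close>] by (rule order_trans)
  also have "\<dots> \<le> LS T p ?G" by (rule GS_le_LS[OF iter_relaxation_le[OF R]])
  finally have "X \<le> bar (LS T p) ?G" using \<open>X \<le> ?G\<close> unfolding bar_def by simp
  also have "\<dots> \<le> R ?G" using R unfolding relaxation_def Let_def by blast
  finally show ?case by (simp add: iter_succ[OF succ(1)])
next
  case (limit a b)
  show ?case unfolding iter_limit[OF limit(1,2)] by (rule INF_greatest) (simp add: limit(3))
qed

lemma iter_GS_bar_eq_iter_LS_bar:
  "\<forall>b<a. propD T p b \<Longrightarrow> iter T (bar (GS T p)) (a::'o::wellorder) = iter T (bar (LS T p)) a"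
  by (rule iter_eq_if_agree_below)
    (simp add: bar_def LS_eq_GS_if_propD[OF _ relaxation_bar_self])

lemma LS_eq_LS_bar_if_propD:
  assumes "\<forall>b\<le>a. propD T p b"
  shows "LS T p (iter T (bar (LS T p)) (a::'o::wellorder)) = bar (LS T p) (iter T (bar (LS T p)) a)"
proof -
  let ?X = "iter T (bar (LS T p)) a"
  have "?X = iter T (bar (GS T p)) a"
    using assms by (simp add: iter_GS_bar_eq_iter_LS_bar)
  moreover have "GS T p (iter T (bar (GS T p)) a) \<le> iter T (bar (GS T p)) a"
    by (rule iter_bar_prefixed[OF mono_GS GS_le[of T p T]])
  ultimately have "GS T p ?X \<le> ?X" by simp
  moreover have "LS T p ?X = GS T p ?X"
    by (rule LS_eq_GS_if_propD[OF _ relaxation_bar_self]) (use assms in simp)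
  ultimately show ?thesis unfolding bar_def by (simp add: inf.absorb1)
qed

lemma iter_LS_eq_iter_LS_bar:
  "\<forall>b<a. propD T p b \<Longrightarrow> iter T (LS T p) (a::'o::wellorder) = iter T (bar (LS T p)) a"
  by (rule iter_eq_if_agree_below) (simp add: LS_eq_LS_bar_if_propD)

lemma outcome_relaxation_le:
  assumes D: "\<forall>a::'o::wellorder. propD T p a"
    and Ra: "relaxation T (bar (LS T p)) Ra TYPE('o)" "has_outcome T Ra TYPE('o)"
    and Rb: "relaxation T (bar (LS T p)) Rb TYPE('o)"
  shows "outcome T Ra TYPE('o) \<le> outcome T Rb TYPE('o)"
proof -
  define c where "c = (LEAST a::'o. stab T Ra a)"
  let ?O = "iter T Ra c"
  have "Ra ?O = ?O"
    using Ra(2) unfolding has_outcome_def c_def stab_def by (rule LeastI_ex)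
  then have "bar (LS T p) ?O = ?O" using Ra(1) unfolding relaxation_def Let_def by blast
  then have "?O \<le> LS T p ?O" unfolding bar_def by (metis inf.absorb_iff1 inf_commute)
  also have "\<dots> \<le> GS T p ?O" using D LS_le_GS_if_propD[OF _ Ra(1)] by blast
  finally have "?O \<le> iter T Rb (LEAST a::'o. stab T Rb a)"
    by (rule GS_postfixed_le_iter_relaxation[OF Rb iter_relaxation_le[OF Ra(1)]])
  then show ?thesis unfolding outcome_def c_def .
qed

lemma order_independent_LS_bar:
  "\<forall>a::'o::wellorder. propD T p a \<Longrightarrow> order_independent T (bar (LS T p)) TYPE('o)"
  unfolding order_independent_def by (meson order.antisym outcome_relaxation_le)

theorem mainTheorem10:
  fixes T :: "'p::finite \<Rightarrow> 'a set" and p :: "'p \<Rightarrow> ('p \<Rightarrow> 'a) \<Rightarrow> real"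
  assumes nonempty: "\<forall>i. T i \<noteq> {}"
    and large: "large_ord TYPE('o::wellorder) TYPE(('p, 'a) restr)"
  shows
    "(\<forall>a::'o. (\<forall>b<a. propD T p b) \<longrightarrow>
         iter T (bar (GS T p)) a = iter T (bar (LS T p)) a)
   \<and> ((\<forall>a::'o. propD T p a) \<longrightarrow>
         has_outcome T (bar (GS T p)) TYPE('o) \<and> has_outcome T (bar (LS T p)) TYPE('o) \<and>
         outcome T (bar (GS T p)) TYPE('o) = outcome T (bar (LS T p)) TYPE('o))
   \<and> ((\<forall>a::'o. propD T p a) \<longrightarrow> order_independent T (bar (LS T p)) TYPE('o))
   \<and> (\<forall>a::'o. (\<forall>b\<le>a. propD T p b) \<longrightarrow>
         iter T (LS T p) a = iter T (bar (LS T p)) a)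
   \<and> ((\<forall>a::'o. propD T p a) \<longrightarrow>
         has_outcome T (LS T p) TYPE('o) \<and>
         outcome T (LS T p) TYPE('o) = outcome T (bar (LS T p)) TYPE('o))"
proof -
  have outcome_GS_bar: "outcome T (bar (GS T p)) TYPE('o) = outcome T (bar (LS T p)) TYPE('o)"
    if "\<forall>a::'o. propD T p a"
    using that
    by (intro outcome_eq_if_agree) (simp add: bar_def LS_eq_GS_if_propD[OF _ relaxation_bar_self])
  have outcome_LS: "has_outcome T (LS T p) TYPE('o) = has_outcome T (bar (LS T p)) TYPE('o)"
    "outcome T (LS T p) TYPE('o) = outcome T (bar (LS T p)) TYPE('o)"
    if "\<forall>a::'o. propD T p a"
    using that by (simp_all add: outcome_eq_if_agree LS_eq_LS_bar_if_propD)
  show ?thesis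
    using has_outcome_bar[OF large] outcome_GS_bar outcome_LS order_independent_LS_bar
    by (auto intro!: iter_GS_bar_eq_iter_LS_bar iter_LS_eq_iter_LS_bar)
qed

end
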